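(* Let $\mathcal{Z}$ be a data space with unknown distribution $\mu$, let $S=(Z_1,\dots,Z_n)$ have i.i.d. entries $Z_i\sim\mu$, let the learning algorithm be a Markov kernel $P_{W|S}$ producing a hypothesis $W$ in a hypothesis class $\mathcal{W}$, with $P_W$ the marginal of $W$ and $P_{W,Z_i}$ the joint law of $(W,Z_i)$. Let $l:\mathcal{W}\times\mathcal{Z}\to\mathbb{R}^+$ be a loss function and assume that for every $i=1,\dots,n$, $l(W,Z_i)$ is $\sigma$-subgaussian when $(W,Z_i)$ is distributed according to $\widehat{P}_{W,Z_i}=\frac{P_{W,Z_i}+P_W\otimes\mu}{2}$. Then $$|\overline{\text{gen}}(P_{W|S},\mu)|\le\frac2n\sum_{i=1}^n\sqrt{2\sigma^2 I_{JS}(W;Z_i)}.$$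
   Context: A random variable $X$ is $\sigma$-subgaussian if $\mathbb{E}[e^{\lambda(X-\mathbb{E}X)}]\le e^{\lambda^2\sigma^2/2}$ for all $\lambda\in\mathbb{R}$. Expected generalization error: $\overline{\text{gen}}(P_{W|S},\mu)=\mathbb{E}_{P_{W,S}}\big[\int l(W,z)\,\mu(dz)-\frac1n\sum_{i=1}^n l(W,Z_i)\big]$. Jensen–Shannon divergence: $JS(P,Q)=\frac12 KL\big(P\|\tfrac{P+Q}{2}\big)+\frac12 KL\big(Q\|\tfrac{P+Q}{2}\big)$, with $KL$ the Kullback–Leibler divergence (natural logarithm). Jensen–Shannon information: $I_{JS}(W;Z_i)=JS(P_{W,Z_i},P_W\otimes P_{Z_i})$, where here $P_{Z_i}=\mu$. *)

theory Defs
  imports "HOL-Probability.Probability"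
begin

(* Kullback-Leibler divergence KL(P || Q), natural logarithm.
   Note: library KL_divergence b M N is KL(N || M). *)
definition KL :: "'a measure \<Rightarrow> 'a measure \<Rightarrow> real" where
  "KL P Q = KL_divergence (exp 1) Q P"

definition mixture2 :: "'a measure \<Rightarrow> 'a measure \<Rightarrow> 'a measure" where
  "mixture2 P Q = measure_of (space P) (sets P) (\<lambda>A. (emeasure P A + emeasure Q A) / 2)"

definition JS :: "'a measure \<Rightarrow> 'a measure \<Rightarrow> real" where
  "JS P Q = 1/2 * KL P (mixture2 P Q) + 1/2 * KL Q (mixture2 P Q)"

definition subgaussian :: "'a measure \<Rightarrow> ('a \<Rightarrow> real) \<Rightarrow> real \<Rightarrow> bool" where
  "subgaussian M X \<sigma> \<longleftrightarrow> integrable M X \<and>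
     (\<forall>t::real. (\<integral>\<^sup>+ x. ennreal (exp (t * (X x - (\<integral>y. X y \<partial>M)))) \<partial>M)
                 \<le> ennreal (exp (t\<^sup>2 * \<sigma>\<^sup>2 / 2)))"

definition sample_law :: "'z measure \<Rightarrow> nat \<Rightarrow> (nat \<Rightarrow> 'z) measure" where
  "sample_law \<mu> n = PiM {..<n} (\<lambda>_. \<mu>)"

definition joint_WS :: "'w measure \<Rightarrow> 'z measure \<Rightarrow> nat \<Rightarrow> ((nat \<Rightarrow> 'z) \<Rightarrow> 'w measure)
    \<Rightarrow> ('w \<times> (nat \<Rightarrow> 'z)) measure" where
  "joint_WS MW \<mu> n K = sample_law \<mu> n \<bind>
      (\<lambda>s. K s \<bind> (\<lambda>w. return (MW \<Otimes>\<^sub>M sample_law \<mu> n) (w, s)))"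

definition law_W :: "'w measure \<Rightarrow> 'z measure \<Rightarrow> nat \<Rightarrow> ((nat \<Rightarrow> 'z) \<Rightarrow> 'w measure) \<Rightarrow> 'w measure" where
  "law_W MW \<mu> n K = distr (joint_WS MW \<mu> n K) MW fst"

definition law_WZ :: "'w measure \<Rightarrow> 'z measure \<Rightarrow> nat \<Rightarrow> ((nat \<Rightarrow> 'z) \<Rightarrow> 'w measure) \<Rightarrow> nat
    \<Rightarrow> ('w \<times> 'z) measure" where
  "law_WZ MW \<mu> n K i = distr (joint_WS MW \<mu> n K) (MW \<Otimes>\<^sub>M \<mu>) (\<lambda>p. (fst p, snd p i))"

definition I_JS :: "'w measure \<Rightarrow> 'z measure \<Rightarrow> nat \<Rightarrow> ((nat \<Rightarrow> 'z) \<Rightarrow> 'w measure) \<Rightarrow> nat \<Rightarrow> real" where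
  "I_JS MW \<mu> n K i = JS (law_WZ MW \<mu> n K i) (law_W MW \<mu> n K \<Otimes>\<^sub>M \<mu>)"

definition gen_err :: "'w measure \<Rightarrow> 'z measure \<Rightarrow> nat \<Rightarrow> ((nat \<Rightarrow> 'z) \<Rightarrow> 'w measure)
    \<Rightarrow> ('w \<Rightarrow> 'z \<Rightarrow> real) \<Rightarrow> real" where
  "gen_err MW \<mu> n K l = (\<integral>p. (\<integral>z. l (fst p) z \<partial>\<mu>) - (\<Sum>i<n. l (fst p) (snd p i)) / real n
      \<partial>joint_WS MW \<mu> n K)"

end

theory Submission
  imports Defs
begin

(* Both P_{W,Z_i} and P_W \<otimes> \<mu> have densities bounded by 2 with respect to their mixture M,
   under which the loss is \<sigma>-subgaussian. The Donsker-Varadhan variational inequality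
   E_P h \<le> KL(P || M) + ln E_M (exp h), applied to h = t (l - E_M l) and optimised over t, gives
   |E_P l - E_M l| \<le> sqrt (2 \<sigma>^2 KL(P || M)) for both measures; the triangle inequality and
   concavity of sqrt combine the two KL terms into 2 sqrt (2 \<sigma>^2 JS). Finally the generalization
   error is the average over i of E_{P_W \<otimes> \<mu>} l - E_{P_{W,Z_i}} l. *)

lemma mult_le_xlnx_minus_plus_exp:
  fixes x y :: real
  assumes "0 \<le> y"
  shows "x * y \<le> y * ln y - y + exp x"
proof (cases "y = 0")
  case False
  then have y: "0 < y" using assms by simp
  have "1 + (x - ln y) \<le> exp (x - ln y)" by (rule exp_ge_add_one_self)
  also have "\<dots> = exp x / y" using y by (simp add: exp_diff)
  finally have "y * (1 + (x - ln y)) \<le> exp x" using y by (simp add: field_simps)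
  then show ?thesis by (simp add: algebra_simps)
qed simp

lemma abs_xlnx_le_two:
  fixes y :: real
  assumes "0 \<le> y" "y \<le> 2"
  shows "\<bar>y * ln y\<bar> \<le> 2"
proof (cases "y = 0")
  case False
  then have y: "0 < y" using assms by simp
  have "y * ln y \<le> y * (y - 1)" using y ln_le_minus_one[OF y] by (simp add: mult_left_mono)
  also have "\<dots> \<le> 2" using assms mult_right_mono[of y 2 y] by (simp add: algebra_simps)
  finally have upper: "y * ln y \<le> 2" .
  have "- ln y \<le> 1 / y - 1" using y ln_le_minus_one[of "1 / y"] by (simp add: ln_div)
  then have "y * (- ln y) \<le> y * (1 / y - 1)" using y by (intro mult_left_mono) auto
  then have "- (y * ln y) \<le> 1 - y" using y by (simp add: algebra_simps)
  with upper y show ?thesis by linarith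
qed simp

lemma abs_le_sqrt_if_linear_le_quadratic:
  fixes D C s :: real
  assumes "\<And>t. t * D \<le> C + t\<^sup>2 * s\<^sup>2 / 2"
  shows "\<bar>D\<bar> \<le> sqrt (2 * s\<^sup>2 * C)"
proof (cases "s = 0")
  case True
  have "D = 0"
  proof (rule ccontr)
    assume "D \<noteq> 0"
    then show False using assms[of "(C + 1) / D"] True by simp
  qed
  then show ?thesis using assms[of 0] by simp
next
  case False
  then have s2: "0 < s\<^sup>2" by simp
  have "(D / s\<^sup>2) * D \<le> C + (D / s\<^sup>2)\<^sup>2 * s\<^sup>2 / 2" by (rule assms)
  also have "(D / s\<^sup>2)\<^sup>2 * s\<^sup>2 / 2 = (D / s\<^sup>2) * D / 2" using s2 by (simp add: power2_eq_square)
  finally have "D\<^sup>2 / s\<^sup>2 \<le> 2 * C" by (simp add: power2_eq_square)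
  then have "D\<^sup>2 \<le> 2 * s\<^sup>2 * C" using s2 by (simp add: divide_le_eq algebra_simps)
  then show ?thesis using real_le_rsqrt[of "\<bar>D\<bar>"] by simp
qed

lemma sqrt_add_le_two_sqrt_mean:
  fixes a b :: real
  assumes "0 \<le> a" "0 \<le> b"
  shows "sqrt a + sqrt b \<le> 2 * sqrt ((a + b) / 2)"
proof -
  have "2 * sqrt a * sqrt b \<le> a + b"
    using assms zero_le_power2[of "sqrt a - sqrt b"]
    by (simp add: power2_eq_square algebra_simps real_sqrt_mult_self)
  then have "((sqrt a + sqrt b) / 2)\<^sup>2 \<le> (a + b) / 2"
    using assms by (simp add: power2_eq_square algebra_simps real_sqrt_mult_self)
  then show ?thesis using real_le_rsqrt by fastforce
qed

lemma (in prob_space) integral_exp_pos: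
  fixes f :: "'a \<Rightarrow> real"
  assumes "integrable M (\<lambda>x. exp (f x))"
  shows "0 < (\<integral>x. exp (f x) \<partial>M)"
proof -
  have "(\<integral>x. exp (f x) \<partial>M) \<noteq> 0"
    using integral_nonneg_eq_0_iff_AE[OF assms] AE_False by simp
  moreover have "0 \<le> (\<integral>x. exp (f x) \<partial>M)" by simp
  ultimately show ?thesis by linarith
qed

lemma (in prob_space) donsker_varadhan_ineq:
  fixes f h :: "'a \<Rightarrow> real"
  assumes f_nonneg: "AE x in M. 0 \<le> f x" and f_int: "integrable M f" and f_norm: "(\<integral>x. f x \<partial>M) = 1"
    and ent_int: "integrable M (\<lambda>x. f x * ln (f x))" and fh_int: "integrable M (\<lambda>x. f x * h x)"
    and exp_int: "integrable M (\<lambda>x. exp (h x))"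
  shows "(\<integral>x. f x * h x \<partial>M) \<le> (\<integral>x. f x * ln (f x) \<partial>M) + ln (\<integral>x. exp (h x) \<partial>M)"
proof -
  define Z where "Z = (\<integral>x. exp (h x) \<partial>M)"
  have Z: "0 < Z" unfolding Z_def using exp_int by (rule integral_exp_pos)
  have "(\<integral>x. f x * h x \<partial>M) - ln Z = (\<integral>x. f x * h x - ln Z * f x \<partial>M)"
    using fh_int f_int f_norm by simp
  also have "\<dots> \<le> (\<integral>x. f x * ln (f x) - f x + exp (h x) / Z \<partial>M)"
  proof (rule integral_mono_AE)
    show "AE x in M. f x * h x - ln Z * f x \<le> f x * ln (f x) - f x + exp (h x) / Z"
      using f_nonneg
    proof eventually_elim
      case (elim x)
      have "(h x - ln Z) * f x \<le> f x * ln (f x) - f x + exp (h x - ln Z)"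
        using elim by (rule mult_le_xlnx_minus_plus_exp)
      then show ?case using Z by (simp add: exp_diff algebra_simps)
    qed
  qed (use fh_int f_int ent_int exp_int in auto)
  also have "\<dots> = (\<integral>x. f x * ln (f x) \<partial>M)"
    using Z ent_int f_int exp_int f_norm unfolding Z_def by simp
  finally show ?thesis unfolding Z_def by simp
qed

lemma subgaussian_integrable: "subgaussian M g \<sigma> \<Longrightarrow> integrable M g"
  unfolding subgaussian_def by simp

lemma subgaussian_exp_centered:
  assumes "subgaussian M g \<sigma>"
  shows "integrable M (\<lambda>x. exp (t * (g x - (\<integral>y. g y \<partial>M))))"
    and "(\<integral>x. exp (t * (g x - (\<integral>y. g y \<partial>M))) \<partial>M) \<le> exp (t\<^sup>2 * \<sigma>\<^sup>2 / 2)"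
proof -
  have mgf: "(\<integral>\<^sup>+ x. ennreal (exp (t * (g x - (\<integral>y. g y \<partial>M)))) \<partial>M)
      \<le> ennreal (exp (t\<^sup>2 * \<sigma>\<^sup>2 / 2))"
    using assms unfolding subgaussian_def by auto
  have [measurable]: "g \<in> borel_measurable M" using subgaussian_integrable[OF assms] by auto
  show int: "integrable M (\<lambda>x. exp (t * (g x - (\<integral>y. g y \<partial>M))))"
    using mgf by (intro integrableI_nonneg) (auto simp: top_unique less_top[symmetric])
  show "(\<integral>x. exp (t * (g x - (\<integral>y. g y \<partial>M))) \<partial>M) \<le> exp (t\<^sup>2 * \<sigma>\<^sup>2 / 2)"
    using mgf by (simp add: nn_integral_eq_integral[OF int])
qed

lemma (in prob_space) subgaussian_density_deviation_le_sqrt_KL: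
  fixes f g :: "'a \<Rightarrow> real"
  assumes f[measurable]: "f \<in> borel_measurable M" and f_nonneg: "AE x in M. 0 \<le> f x"
    and prob: "prob_space (density M f)" and sg: "subgaussian M g \<sigma>"
    and fg_int: "integrable M (\<lambda>x. f x * g x)" and ent_int: "integrable M (\<lambda>x. f x * ln (f x))"
  shows "\<bar>(\<integral>x. g x \<partial>density M f) - (\<integral>x. g x \<partial>M)\<bar> \<le> sqrt (2 * \<sigma>\<^sup>2 * KL (density M f) M)"
proof -
  have [measurable]: "g \<in> borel_measurable M" using subgaussian_integrable[OF sg] by auto
  define c where "c = (\<integral>y. g y \<partial>M)"
  have KL: "KL (density M f) M = (\<integral>x. f x * ln (f x) \<partial>M)"
    unfolding KL_def using f_nonneg by (subst KL_density) (auto simp: log_def)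
  interpret Mf: prob_space "density M f" by (rule prob)
  have f_int: "integrable M f"
    using Mf.integrable_const[of "1 :: real"] f_nonneg by (subst (asm) integrable_density) auto
  have "(\<integral>x. f x \<partial>M) = (\<integral>x. 1 \<partial>density M f)"
    using f_nonneg by (subst integral_density) auto
  then have f_norm: "(\<integral>x. f x \<partial>M) = 1" using Mf.prob_space by simp
  have "t * ((\<integral>x. f x * g x \<partial>M) - c) \<le> KL (density M f) M + t\<^sup>2 * \<sigma>\<^sup>2 / 2" for t
  proof -
    have "t * ((\<integral>x. f x * g x \<partial>M) - c) = (\<integral>x. f x * (t * (g x - c)) \<partial>M)"
      using fg_int f_int f_norm by (simp add: algebra_simps)
    also have "\<dots> \<le> KL (density M f) M + ln (\<integral>x. exp (t * (g x - c)) \<partial>M)"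
      unfolding KL using f_nonneg f_int f_norm ent_int
      by (rule donsker_varadhan_ineq)
         (use fg_int f_int subgaussian_exp_centered(1)[OF sg] in \<open>simp_all add: c_def algebra_simps\<close>)
    also have "ln (\<integral>x. exp (t * (g x - c)) \<partial>M) \<le> ln (exp (t\<^sup>2 * \<sigma>\<^sup>2 / 2))"
      using subgaussian_exp_centered[OF sg, of t] integral_exp_pos[OF subgaussian_exp_centered(1)[OF sg]]
      unfolding c_def by (subst ln_le_cancel_iff) auto
    finally show ?thesis by simp
  qed
  then have "\<bar>(\<integral>x. f x * g x \<partial>M) - c\<bar> \<le> sqrt (2 * \<sigma>\<^sup>2 * KL (density M f) M)"
    by (intro abs_le_sqrt_if_linear_le_quadratic) (simp add: mult.commute)
  then show ?thesis using f_nonneg by (simp add: integral_density c_def)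
qed

lemma sets_mixture2 [simp]: "sets (mixture2 P Q) = sets P"
  unfolding mixture2_def using sets_measure_of[OF sets.space_closed, of P] sets.sigma_sets_eq[of P]
  by simp

lemma space_mixture2 [simp]: "space (mixture2 P Q) = space P"
  using sets_eq_imp_space_eq[OF sets_mixture2] .

lemma emeasure_mixture2:
  assumes sets_eq: "sets Q = sets P" and A: "A \<in> sets P"
  shows "emeasure (mixture2 P Q) A = (emeasure P A + emeasure Q A) / 2"
  unfolding mixture2_def
proof (rule emeasure_measure_of_sigma[OF sets.sigma_algebra_axioms _ _ A])
  show "positive (sets P) (\<lambda>A. (emeasure P A + emeasure Q A) / 2)"
    unfolding positive_def by simp
  show "countably_additive (sets P) (\<lambda>A. (emeasure P A + emeasure Q A) / 2)"
    unfolding countably_additive_def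
  proof (intro allI impI)
    fix F :: "nat \<Rightarrow> _"
    assume F: "range F \<subseteq> sets P" "disjoint_family F" "\<Union> (range F) \<in> sets P"
    have "(\<Sum>i. (emeasure P (F i) + emeasure Q (F i)) / 2)
        = ((\<Sum>i. emeasure P (F i)) + (\<Sum>i. emeasure Q (F i))) / 2"
      by (simp add: suminf_add)
    also have "\<dots> = (emeasure P (\<Union> (range F)) + emeasure Q (\<Union> (range F))) / 2"
      using F sets_eq by (simp add: suminf_emeasure)
    finally show "(\<Sum>i. (emeasure P (F i) + emeasure Q (F i)) / 2)
        = (emeasure P (\<Union> (range F)) + emeasure Q (\<Union> (range F))) / 2" .
  qed
qed

lemma prob_space_mixture2:
  assumes "prob_space P" "prob_space Q" "sets Q = sets P"
  shows "prob_space (mixture2 P Q)"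
proof
  have "emeasure P (space P) = 1" "emeasure Q (space P) = 1"
    using prob_space.emeasure_space_1[OF assms(1)] prob_space.emeasure_space_1[OF assms(2)]
      sets_eq_imp_space_eq[OF assms(3)] by simp_all
  then have "emeasure (mixture2 P Q) (space P) = (1 + 1) / 2"
    using assms(3) by (simp add: emeasure_mixture2)
  then show "emeasure (mixture2 P Q) (space (mixture2 P Q)) = 1"
    by (simp add: one_add_one[symmetric] del: one_add_one)
qed

lemma mixture2_commute:
  assumes "sets Q = sets P"
  shows "mixture2 Q P = mixture2 P Q"
  using assms by (intro measure_eqI) (simp_all add: emeasure_mixture2 add.commute)

lemma absolutely_continuous_mixture2:
  assumes "sets Q = sets P"
  shows "absolutely_continuous (mixture2 P Q) P"
  unfolding absolutely_continuous_def
proof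
  fix A assume null: "A \<in> null_sets (mixture2 P Q)"
  then have A: "A \<in> sets P" by (simp add: null_sets_def)
  have "(emeasure P A + emeasure Q A) / 2 = 0"
    using null emeasure_mixture2[OF assms A] by (simp add: null_sets_def)
  with A show "A \<in> null_sets P" by (intro null_setsI) (simp_all add: ennreal_divide_eq_0_iff)
qed

lemma mixture2_density_le_two:
  assumes P: "prob_space P" and Q: "prob_space Q" and sets_eq: "sets Q = sets P"
  obtains f :: "'a \<Rightarrow> real" where "f \<in> borel_measurable (mixture2 P Q)"
    and "AE x in mixture2 P Q. 0 \<le> f x \<and> f x \<le> 2"
    and "P = density (mixture2 P Q) f"
proof -
  define M where "M = mixture2 P Q"
  interpret M: prob_space M unfolding M_def by (rule prob_space_mixture2[OF assms])
  define fP where "fP = RN_deriv M P"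
  define fQ where "fQ = RN_deriv M Q"
  have [measurable]: "fP \<in> borel_measurable M" "fQ \<in> borel_measurable M"
    unfolding fP_def fQ_def by simp_all
  have ac_P: "absolutely_continuous M P"
    unfolding M_def using sets_eq by (rule absolutely_continuous_mixture2)
  have ac_Q: "absolutely_continuous M Q"
    using absolutely_continuous_mixture2[OF sets_eq[symmetric]]
    unfolding M_def mixture2_commute[OF sets_eq] .
  have dens_P: "density M fP = P"
    unfolding fP_def using ac_P by (rule M.density_RN_deriv) (simp add: M_def)
  have dens_Q: "density M fQ = Q"
    unfolding fQ_def using ac_Q by (rule M.density_RN_deriv) (simp add: M_def sets_eq)
  have "density M (\<lambda>x. fP x + fQ x) = density M (\<lambda>_. 2)"
  proof (rule measure_eqI)
    fix A assume "A \<in> sets (density M (\<lambda>x. fP x + fQ x))"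
    then have A: "A \<in> sets M" by simp
    have "emeasure (density M (\<lambda>x. fP x + fQ x)) A = emeasure P A + emeasure Q A"
      using emeasure_density_add[OF A, of fP fQ] dens_P dens_Q by simp
    also have "\<dots> = 2 * ((emeasure P A + emeasure Q A) / 2)"
      unfolding ennreal_times_divide mult.commute[of 2]
      by (rule mult_divide_eq_ennreal[symmetric]) simp_all
    also have "\<dots> = 2 * emeasure M A"
      using A sets_eq by (simp add: M_def emeasure_mixture2)
    finally show "emeasure (density M (\<lambda>x. fP x + fQ x)) A = emeasure (density M (\<lambda>_. 2)) A"
      using A by (simp add: emeasure_density_const)
  qed simp
  then have "AE x in M. fP x + fQ x = 2" by (intro M.density_unique) auto
  then have approx: "AE x in M. fP x = ennreal (enn2real (fP x)) \<and> enn2real (fP x) \<le> 2"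
  proof eventually_elim
    case (elim x)
    then have le: "fP x \<le> 2" by (metis le_iff_add)
    then have "fP x \<noteq> \<top>" by (metis ennreal_numeral top_neq_numeral top_unique)
    moreover have "enn2real (fP x) \<le> 2"
      using le by (metis enn2real_leI ennreal_numeral zero_le_numeral)
    ultimately show ?case by (simp add: less_top)
  qed
  show ?thesis
  proof (rule that[of "\<lambda>x. enn2real (fP x)"])
    show "(\<lambda>x. enn2real (fP x)) \<in> borel_measurable (mixture2 P Q)"
      unfolding M_def[symmetric] by simp
    show "AE x in mixture2 P Q. 0 \<le> enn2real (fP x) \<and> enn2real (fP x) \<le> 2"
      using approx unfolding M_def by auto
    have "density M fP = density M (\<lambda>x. enn2real (fP x))"
      using approx by (intro density_cong) auto
    then show "P = density (mixture2 P Q) (\<lambda>x. enn2real (fP x))"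
      using dens_P by (simp add: M_def)
  qed
qed

lemma integrable_mult_AE_bounded:
  fixes f g :: "'a \<Rightarrow> real"
  assumes "integrable M g" "f \<in> borel_measurable M" "AE x in M. \<bar>f x\<bar> \<le> B"
  shows "integrable M (\<lambda>x. f x * g x)"
proof (rule Bochner_Integration.integrable_bound[OF integrable_mult_right[OF assms(1), of B]])
  show "AE x in M. norm (f x * g x) \<le> norm (B * g x)"
    using assms(3) by eventually_elim (auto simp: abs_mult intro!: mult_right_mono)
qed (use assms in auto)

lemma
  assumes P: "prob_space P" and Q: "prob_space Q" and sets_eq: "sets Q = sets P"
  shows integrable_mixture2_component: "integrable (mixture2 P Q) g \<Longrightarrow> integrable P g"
    and mixture2_component_deviation_le_sqrt_KL: "subgaussian (mixture2 P Q) g \<sigma> \<Longrightarrow>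
      \<bar>(\<integral>x. g x \<partial>P) - (\<integral>x. g x \<partial>mixture2 P Q)\<bar> \<le> sqrt (2 * \<sigma>\<^sup>2 * KL P (mixture2 P Q))"
    and KL_mixture2_nonneg: "0 \<le> KL P (mixture2 P Q)"
proof -
  define M where "M = mixture2 P Q"
  interpret M: information_space M "exp 1"
    by (intro information_space.intro information_space_axioms.intro)
       (simp_all add: M_def prob_space_mixture2[OF P Q sets_eq])
  obtain f :: "'a \<Rightarrow> real" where f[measurable]: "f \<in> borel_measurable M"
    and f_bounds: "AE x in M. 0 \<le> f x \<and> f x \<le> 2" and P_eq: "P = density M f"
    using mixture2_density_le_two[OF P Q sets_eq] unfolding M_def by blast
  have f_nonneg: "AE x in M. 0 \<le> f x" using f_bounds by auto
  have prob_f: "prob_space (density M f)" using P unfolding P_eq .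
  have fg_int: "integrable M (\<lambda>x. f x * g x)" if "integrable M g" for g :: "'a \<Rightarrow> real"
    using f_bounds by (intro integrable_mult_AE_bounded[OF that f, of 2]) auto
  have ent_int: "integrable M (\<lambda>x. f x * ln (f x))"
    using f_bounds abs_xlnx_le_two by (intro M.integrable_const_bound[where B = 2]) auto
  show "integrable P g" if "integrable (mixture2 P Q) g"
    using that fg_int[of g] f_nonneg unfolding M_def[symmetric] unfolding P_eq
    by (subst integrable_density) auto
  show "\<bar>(\<integral>x. g x \<partial>P) - (\<integral>x. g x \<partial>mixture2 P Q)\<bar> \<le> sqrt (2 * \<sigma>\<^sup>2 * KL P (mixture2 P Q))"
    if sg: "subgaussian (mixture2 P Q) g \<sigma>"
    unfolding M_def[symmetric] unfolding P_eq
    using f f_nonneg prob_f sg[folded M_def]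
      fg_int[OF subgaussian_integrable[OF sg[folded M_def]]] ent_int
    by (rule M.subgaussian_density_deviation_le_sqrt_KL)
  show "0 \<le> KL P (mixture2 P Q)"
    unfolding M_def[symmetric] unfolding P_eq KL_def
    using prob_f f f_nonneg ent_int by (intro M.KL_nonneg) (simp_all add: log_def)
qed

lemma abs_integral_diff_le_sqrt_JS:
  assumes P: "prob_space P" and Q: "prob_space Q" and sets_eq: "sets Q = sets P"
    and sg: "subgaussian (mixture2 P Q) g \<sigma>"
  shows "\<bar>(\<integral>x. g x \<partial>P) - (\<integral>x. g x \<partial>Q)\<bar> \<le> 2 * sqrt (2 * \<sigma>\<^sup>2 * JS P Q)"
proof -
  define M where "M = mixture2 P Q"
  have sg': "subgaussian (mixture2 Q P) g \<sigma>" using sg mixture2_commute[OF sets_eq] by simp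
  note dev_P = mixture2_component_deviation_le_sqrt_KL[OF P Q sets_eq sg, folded M_def]
  note dev_Q = mixture2_component_deviation_le_sqrt_KL[OF Q P sets_eq[symmetric] sg',
      unfolded mixture2_commute[OF sets_eq], folded M_def]
  have KL_P: "0 \<le> KL P M" unfolding M_def by (rule KL_mixture2_nonneg[OF P Q sets_eq])
  have KL_Q: "0 \<le> KL Q M"
    using KL_mixture2_nonneg[OF Q P sets_eq[symmetric]] unfolding M_def mixture2_commute[OF sets_eq] .
  have "\<bar>(\<integral>x. g x \<partial>P) - (\<integral>x. g x \<partial>Q)\<bar>
      \<le> \<bar>(\<integral>x. g x \<partial>P) - (\<integral>x. g x \<partial>M)\<bar> + \<bar>(\<integral>x. g x \<partial>Q) - (\<integral>x. g x \<partial>M)\<bar>"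
    by linarith
  also have "\<dots> \<le> sqrt (2 * \<sigma>\<^sup>2 * KL P M) + sqrt (2 * \<sigma>\<^sup>2 * KL Q M)"
    using dev_P dev_Q by (rule add_mono)
  also have "\<dots> \<le> 2 * sqrt ((2 * \<sigma>\<^sup>2 * KL P M + 2 * \<sigma>\<^sup>2 * KL Q M) / 2)"
    using KL_P KL_Q by (intro sqrt_add_le_two_sqrt_mean) auto
  also have "(2 * \<sigma>\<^sup>2 * KL P M + 2 * \<sigma>\<^sup>2 * KL Q M) / 2 = 2 * \<sigma>\<^sup>2 * JS P Q"
    unfolding JS_def M_def by (simp add: algebra_simps)
  finally show ?thesis .
qed

lemma
  assumes \<mu>: "prob_space \<mu>" and K[measurable]: "K \<in> sample_law \<mu> n \<rightarrow>\<^sub>M prob_algebra MW"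
  shows prob_space_joint_WS: "prob_space (joint_WS MW \<mu> n K)"
    and sets_joint_WS: "sets (joint_WS MW \<mu> n K) = sets (MW \<Otimes>\<^sub>M sample_law \<mu> n)"
proof -
  have "sample_law \<mu> n \<in> space (prob_algebra (sample_law \<mu> n))"
    using \<mu> by (simp add: space_prob_algebra sample_law_def prob_space_PiM)
  moreover have "(\<lambda>s. K s \<bind> (\<lambda>w. return (MW \<Otimes>\<^sub>M sample_law \<mu> n) (w, s)))
      \<in> sample_law \<mu> n \<rightarrow>\<^sub>M prob_algebra (MW \<Otimes>\<^sub>M sample_law \<mu> n)"
    by measurable
  ultimately show "prob_space (joint_WS MW \<mu> n K)"
    and "sets (joint_WS MW \<mu> n K) = sets (MW \<Otimes>\<^sub>M sample_law \<mu> n)"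
    unfolding joint_WS_def by (rule prob_space_bind', rule sets_bind')
qed

lemma measurable_joint_WS_component [measurable]:
  assumes "prob_space \<mu>" "K \<in> sample_law \<mu> n \<rightarrow>\<^sub>M prob_algebra MW" "i < n"
  shows "(\<lambda>p. (fst p, snd p i)) \<in> joint_WS MW \<mu> n K \<rightarrow>\<^sub>M MW \<Otimes>\<^sub>M \<mu>"
  unfolding measurable_cong_sets[OF sets_joint_WS[OF assms(1,2)] refl] sample_law_def
  by measurable (use assms(3) in simp)

lemma
  assumes \<mu>: "prob_space \<mu>" and K: "K \<in> sample_law \<mu> n \<rightarrow>\<^sub>M prob_algebra MW"
  shows prob_space_law_W: "prob_space (law_W MW \<mu> n K)"
    and prob_space_law_WZ: "i < n \<Longrightarrow> prob_space (law_WZ MW \<mu> n K i)"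
  using prob_space_joint_WS[OF assms] measurable_joint_WS_component[OF assms]
  unfolding law_W_def law_WZ_def
  by (auto intro!: prob_space.prob_space_distr simp: measurable_cong_sets[OF sets_joint_WS[OF assms] refl])

lemma
  fixes l :: "'w \<Rightarrow> 'z \<Rightarrow> real"
  assumes \<mu>: "prob_space \<mu>" and K[measurable]: "K \<in> sample_law \<mu> n \<rightarrow>\<^sub>M prob_algebra MW"
    and l[measurable]: "(\<lambda>(w, z). l w z) \<in> borel_measurable (MW \<Otimes>\<^sub>M \<mu>)"
    and int: "integrable (law_W MW \<mu> n K \<Otimes>\<^sub>M \<mu>) (\<lambda>(w, z). l w z)"
  shows integrable_joint_WS_population_risk:
      "integrable (joint_WS MW \<mu> n K) (\<lambda>p. \<integral>z. l (fst p) z \<partial>\<mu>)"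
    and integral_joint_WS_population_risk:
      "(\<integral>p. (\<integral>z. l (fst p) z \<partial>\<mu>) \<partial>joint_WS MW \<mu> n K)
        = integral\<^sup>L (law_W MW \<mu> n K \<Otimes>\<^sub>M \<mu>) (\<lambda>(w, z). l w z)"
proof -
  interpret \<mu>: prob_space \<mu> by (rule \<mu>)
  interpret PW\<mu>: pair_sigma_finite "law_W MW \<mu> n K" \<mu>
    by (intro pair_sigma_finite.intro prob_space_imp_sigma_finite prob_space_law_W[OF \<mu> K] \<mu>)
  have fst[measurable]: "fst \<in> joint_WS MW \<mu> n K \<rightarrow>\<^sub>M MW"
    unfolding measurable_cong_sets[OF sets_joint_WS[OF \<mu> K] refl] by simp
  have risk[measurable]: "(\<lambda>w. \<integral>z. l w z \<partial>\<mu>) \<in> borel_measurable MW"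
    by (rule \<mu>.borel_measurable_lebesgue_integral) simp
  have "integrable (law_W MW \<mu> n K) (\<lambda>w. \<integral>z. l w z \<partial>\<mu>)"
    using PW\<mu>.integrable_fst'[OF int] by simp
  then show "integrable (joint_WS MW \<mu> n K) (\<lambda>p. \<integral>z. l (fst p) z \<partial>\<mu>)"
    unfolding law_W_def by (subst (asm) integrable_distr_eq) simp_all
  have "(\<integral>p. (\<integral>z. l (fst p) z \<partial>\<mu>) \<partial>joint_WS MW \<mu> n K)
      = (\<integral>w. (\<integral>z. l w z \<partial>\<mu>) \<partial>law_W MW \<mu> n K)"
    unfolding law_W_def by (rule integral_distr[symmetric]) simp_all
  also have "\<dots> = integral\<^sup>L (law_W MW \<mu> n K \<Otimes>\<^sub>M \<mu>) (\<lambda>(w, z). l w z)"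
    using PW\<mu>.integral_fst'[OF int] by simp
  finally show "(\<integral>p. (\<integral>z. l (fst p) z \<partial>\<mu>) \<partial>joint_WS MW \<mu> n K)
      = integral\<^sup>L (law_W MW \<mu> n K \<Otimes>\<^sub>M \<mu>) (\<lambda>(w, z). l w z)" .
qed

lemma
  fixes l :: "'w \<Rightarrow> 'z \<Rightarrow> real"
  assumes \<mu>: "prob_space \<mu>" and K: "K \<in> sample_law \<mu> n \<rightarrow>\<^sub>M prob_algebra MW" and i: "i < n"
    and l[measurable]: "(\<lambda>(w, z). l w z) \<in> borel_measurable (MW \<Otimes>\<^sub>M \<mu>)"
  shows integrable_law_WZ_iff:
      "integrable (law_WZ MW \<mu> n K i) (\<lambda>(w, z). l w z)
        \<longleftrightarrow> integrable (joint_WS MW \<mu> n K) (\<lambda>p. l (fst p) (snd p i))"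
    and integral_law_WZ:
      "integral\<^sup>L (law_WZ MW \<mu> n K i) (\<lambda>(w, z). l w z)
        = (\<integral>p. l (fst p) (snd p i) \<partial>joint_WS MW \<mu> n K)"
  unfolding law_WZ_def
  using integrable_distr_eq[OF measurable_joint_WS_component[OF \<mu> K i] l]
    integral_distr[OF measurable_joint_WS_component[OF \<mu> K i] l]
  by simp_all

lemma gen_err_eq_mean_deviation:
  fixes l :: "'w \<Rightarrow> 'z \<Rightarrow> real"
  assumes \<mu>: "prob_space \<mu>" and n: "0 < n" and K: "K \<in> sample_law \<mu> n \<rightarrow>\<^sub>M prob_algebra MW"
    and l: "(\<lambda>(w, z). l w z) \<in> borel_measurable (MW \<Otimes>\<^sub>M \<mu>)"
    and int_W\<mu>: "integrable (law_W MW \<mu> n K \<Otimes>\<^sub>M \<mu>) (\<lambda>(w, z). l w z)"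
    and int_WZ: "\<And>i. i < n \<Longrightarrow> integrable (law_WZ MW \<mu> n K i) (\<lambda>(w, z). l w z)"
  shows "gen_err MW \<mu> n K l
    = (\<Sum>i<n. integral\<^sup>L (law_W MW \<mu> n K \<Otimes>\<^sub>M \<mu>) (\<lambda>(w, z). l w z)
              - integral\<^sup>L (law_WZ MW \<mu> n K i) (\<lambda>(w, z). l w z)) / real n"
proof -
  define J where "J = joint_WS MW \<mu> n K"
  have int_i: "integrable J (\<lambda>p. l (fst p) (snd p i))" if "i < n" for i
    using int_WZ[OF that] integrable_law_WZ_iff[OF \<mu> K that l] unfolding J_def by simp
  then have int_empirical: "integrable J (\<lambda>p. (\<Sum>i<n. l (fst p) (snd p i)) / real n)"
    by (intro integrable_divide Bochner_Integration.integrable_sum) simp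
  have "gen_err MW \<mu> n K l
      = (\<integral>p. (\<integral>z. l (fst p) z \<partial>\<mu>) \<partial>J) - (\<integral>p. (\<Sum>i<n. l (fst p) (snd p i)) / real n \<partial>J)"
    unfolding gen_err_def J_def[symmetric]
    using integrable_joint_WS_population_risk[OF \<mu> K l int_W\<mu>] int_empirical
    by (intro Bochner_Integration.integral_diff) (simp_all add: J_def)
  also have "(\<integral>p. (\<Sum>i<n. l (fst p) (snd p i)) / real n \<partial>J)
      = (\<Sum>i<n. integral\<^sup>L (law_WZ MW \<mu> n K i) (\<lambda>(w, z). l w z)) / real n"
    using int_i integral_law_WZ[OF \<mu> K _ l] by (simp add: J_def)
  also have "(\<integral>p. (\<integral>z. l (fst p) z \<partial>\<mu>) \<partial>J)
      = (\<Sum>i<n. integral\<^sup>L (law_W MW \<mu> n K \<Otimes>\<^sub>M \<mu>) (\<lambda>(w, z). l w z)) / real n"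
    using integral_joint_WS_population_risk[OF \<mu> K l int_W\<mu>] n by (simp add: J_def)
  finally show ?thesis by (simp add: sum_subtractf diff_divide_distrib)
qed

theorem corollary1:
  fixes MW :: "'w measure" and \<mu> :: "'z measure" and n :: nat
    and K :: "(nat \<Rightarrow> 'z) \<Rightarrow> 'w measure" and l :: "'w \<Rightarrow> 'z \<Rightarrow> real" and \<sigma> :: real
  assumes "prob_space \<mu>"
    and "n > 0"
    and "K \<in> sample_law \<mu> n \<rightarrow>\<^sub>M prob_algebra MW"
    and "(\<lambda>(w, z). l w z) \<in> borel_measurable (MW \<Otimes>\<^sub>M \<mu>)"
    and "\<And>w z. l w z \<ge> 0"
    and "\<And>i. i < n \<Longrightarrow> subgaussian (mixture2 (law_WZ MW \<mu> n K i) (law_W MW \<mu> n K \<Otimes>\<^sub>M \<mu>))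
                                    (\<lambda>(w, z). l w z) \<sigma>"
  shows "\<bar>gen_err MW \<mu> n K l\<bar> \<le> 2 / real n * (\<Sum>i<n. sqrt (2 * \<sigma>\<^sup>2 * I_JS MW \<mu> n K i))"
proof -
  note \<mu> = assms(1) and K = assms(3) and l = assms(4) and sg = assms(6)
  define Q where "Q = law_W MW \<mu> n K \<Otimes>\<^sub>M \<mu>"
  define P where "P i = law_WZ MW \<mu> n K i" for i
  have Q: "prob_space Q"
    unfolding Q_def by (intro prob_space_pair prob_space_law_W[OF \<mu> K] \<mu>)
  have P: "prob_space (P i)" if "i < n" for i
    unfolding P_def using \<mu> K that by (rule prob_space_law_WZ)
  have sets_eq: "sets Q = sets (P i)" for i
    unfolding Q_def P_def law_WZ_def law_W_def by (simp cong: sets_pair_measure_cong)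
  have int_mixture: "integrable (mixture2 (P i) Q) (\<lambda>(w, z). l w z)" if "i < n" for i
    using subgaussian_integrable[OF sg[OF that]] unfolding P_def Q_def .
  have int_P: "integrable (P i) (\<lambda>(w, z). l w z)" if "i < n" for i
    using P[OF that] Q sets_eq int_mixture[OF that] by (rule integrable_mixture2_component)
  have int_Q: "integrable Q (\<lambda>(w, z). l w z)"
    using Q P[OF assms(2)] sets_eq[symmetric]
      int_mixture[OF assms(2), folded mixture2_commute[OF sets_eq]]
    by (rule integrable_mixture2_component)
  have dev: "\<bar>integral\<^sup>L Q (\<lambda>(w, z). l w z) - integral\<^sup>L (P i) (\<lambda>(w, z). l w z)\<bar>
      \<le> 2 * sqrt (2 * \<sigma>\<^sup>2 * I_JS MW \<mu> n K i)" if "i < n" for i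
    using abs_integral_diff_le_sqrt_JS[OF P[OF that] Q sets_eq sg[OF that, folded P_def Q_def]]
    by (simp add: I_JS_def P_def Q_def abs_minus_commute)
  have "\<bar>gen_err MW \<mu> n K l\<bar>
      = \<bar>\<Sum>i<n. integral\<^sup>L Q (\<lambda>(w, z). l w z) - integral\<^sup>L (P i) (\<lambda>(w, z). l w z)\<bar> / real n"
    using gen_err_eq_mean_deviation[OF \<mu> assms(2) K l int_Q[unfolded Q_def] int_P[unfolded P_def]]
    by (simp add: P_def Q_def)
  also have "\<dots> \<le> (\<Sum>i<n. 2 * sqrt (2 * \<sigma>\<^sup>2 * I_JS MW \<mu> n K i)) / real n"
    using dev by (intro divide_right_mono order.trans[OF sum_abs] sum_mono) simp_all
  also have "\<dots> = 2 / real n * (\<Sum>i<n. sqrt (2 * \<sigma>\<^sup>2 * I_JS MW \<mu> n K i))"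
    unfolding sum_distrib_left[symmetric] by simp
  finally show ?thesis .
qed

end
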